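(* For any graph $G$ and any unit flow $F$ in $G$, there is an integral unit flow $F^*$ with $F^*[u,v]=F[u,v]$ for all $u,v\in V(G)$ and $\mathsf{inter}(F^* )\le\mathsf{inter}(F)$. Consequently, for every graph $G$ and every unit-weighted graph $H$, $$\mathsf{inter}^*_G(H)=\mathsf{inter}_G(H)\le\mathsf{con}_G(H).$$
   Context: Let $G=(V,E)$; $\mathcal P_{uv}$ is the set of paths in $G$ between $u$ and $v$, $\mathcal P=\bigcup\mathcal P_{uv}$. A flow is $F:\mathcal P\to[0,\infty)$, $F[u,v]=\sum_{p\in\mathcal P_{uv}}F(p)$. $F$ is integral if for each $u,v$ it is supported on at most one path of $\mathcal P_{uv}$, and a unit flow if $F[u,v]\in\{0,1\}$ for all $u,v$. Congestion: $\mathsf{con}(F)=\sum_{v}C_F(v)^2$, $C_F(v)=\sum_{p\ni v}F(p)$. Intersection number: $\mathsf{inter}(F)=\sum_{(u,v,u',v'):|\{u,v,u',v'\}|=4}\sum_{p\in\mathcal P_{uv},p'\in\mathcal P_{u'v'}}\sum_{x\in p\cap p'}F(p)F(p')$. For an edge-weighted graph $H$ with weights $w$, a flow $F$ in $G$ is an $H$-flow if there is an injective $\phi:V(H)\to V$ with $F[\phi(u),\phi(v)]\ge w(u,v)$ for every edge $\{u,v\}$ of $H$; unit-weighted means $w\equiv1$. Then $\mathsf{con}_G(H)=\min\mathsf{con}(F)$ and $\mathsf{inter}_G(H)=\min\mathsf{inter}(F)$ over $H$-flows $F$ in $G$, and $\mathsf{inter}^*_G(H)=\min\mathsf{inter}(F)$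 over integral $H$-flows $F$ in $G$. *)

theory Defs
  imports Complex_Main
begin

definition simple_graph :: "'a set \<Rightarrow> ('a \<times> 'a) set \<Rightarrow> bool" where
  "simple_graph V E \<longleftrightarrow> finite V \<and> E \<subseteq> V \<times> V \<and> sym E \<and> irrefl E"

definition is_path :: "'a set \<Rightarrow> ('a \<times> 'a) set \<Rightarrow> 'a list \<Rightarrow> bool" where
  "is_path V E p \<longleftrightarrow> p \<noteq> [] \<and> distinct p \<and> set p \<subseteq> V \<and>
     (\<forall>i. Suc i < length p \<longrightarrow> (p ! i, p ! Suc i) \<in> E)"

definition all_paths :: "'a set \<Rightarrow> ('a \<times> 'a) set \<Rightarrow> 'a list set" where
  "all_paths V E = {p. is_path V E p}"

definition paths :: "'a set \<Rightarrow> ('a \<times> 'a) set \<Rightarrow> 'a \<Rightarrow> 'a \<Rightarrow> 'a list set" where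
  "paths V E u v = {p. is_path V E p \<and> hd p = u \<and> last p = v}"

definition is_flow :: "'a set \<Rightarrow> ('a \<times> 'a) set \<Rightarrow> ('a list \<Rightarrow> real) \<Rightarrow> bool" where
  "is_flow V E F \<longleftrightarrow> (\<forall>p. 0 \<le> F p) \<and> (\<forall>p. \<not> is_path V E p \<longrightarrow> F p = 0)"

definition flow_val :: "'a set \<Rightarrow> ('a \<times> 'a) set \<Rightarrow> ('a list \<Rightarrow> real) \<Rightarrow> 'a \<Rightarrow> 'a \<Rightarrow> real" where
  "flow_val V E F u v = (\<Sum>p\<in>paths V E u v. F p)"

definition integral_flow :: "'a set \<Rightarrow> ('a \<times> 'a) set \<Rightarrow> ('a list \<Rightarrow> real) \<Rightarrow> bool" where
  "integral_flow V E F \<longleftrightarrow> (\<forall>u v. card {p \<in> paths V E u v. F p \<noteq> 0} \<le> 1)"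

definition unit_flow :: "'a set \<Rightarrow> ('a \<times> 'a) set \<Rightarrow> ('a list \<Rightarrow> real) \<Rightarrow> bool" where
  "unit_flow V E F \<longleftrightarrow> (\<forall>u v. flow_val V E F u v \<in> {0, 1})"

definition load :: "'a set \<Rightarrow> ('a \<times> 'a) set \<Rightarrow> ('a list \<Rightarrow> real) \<Rightarrow> 'a \<Rightarrow> real" where
  "load V E F x = (\<Sum>p\<in>{p \<in> all_paths V E. x \<in> set p}. F p)"

definition con :: "'a set \<Rightarrow> ('a \<times> 'a) set \<Rightarrow> ('a list \<Rightarrow> real) \<Rightarrow> real" where
  "con V E F = (\<Sum>x\<in>V. (load V E F x)\<^sup>2)"

definition inter :: "'a set \<Rightarrow> ('a \<times> 'a) set \<Rightarrow> ('a list \<Rightarrow> real) \<Rightarrow> real" where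
  "inter V E F =
     (\<Sum>(u, v, u', v') \<in> {(u, v, u', v'). u \<in> V \<and> v \<in> V \<and> u' \<in> V \<and> v' \<in> V \<and> card {u, v, u', v'} = 4}.
        \<Sum>p\<in>paths V E u v. \<Sum>p'\<in>paths V E u' v'. \<Sum>x\<in>set p \<inter> set p'. F p * F p')"

text \<open>H-flow for an edge-weighted graph H = (VH, EH) with weights w.
  EH is symmetric, so every edge {u,v} is required in both labelings.\<close>
definition is_H_flow :: "'a set \<Rightarrow> ('a \<times> 'a) set \<Rightarrow> 'b set \<Rightarrow> ('b \<times> 'b) set \<Rightarrow> ('b \<Rightarrow> 'b \<Rightarrow> real)
     \<Rightarrow> ('a list \<Rightarrow> real) \<Rightarrow> bool" where
  "is_H_flow V E VH EH w F \<longleftrightarrow> is_flow V E F \<and>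
     (\<exists>\<phi>. inj_on \<phi> VH \<and> \<phi> ` VH \<subseteq> V \<and>
        (\<forall>(u, v) \<in> EH. w u v \<le> flow_val V E F (\<phi> u) (\<phi> v)))"

definition con_G :: "'a set \<Rightarrow> ('a \<times> 'a) set \<Rightarrow> 'b set \<Rightarrow> ('b \<times> 'b) set \<Rightarrow> ('b \<Rightarrow> 'b \<Rightarrow> real) \<Rightarrow> real" where
  "con_G V E VH EH w = Inf (con V E ` {F. is_H_flow V E VH EH w F})"

definition inter_G :: "'a set \<Rightarrow> ('a \<times> 'a) set \<Rightarrow> 'b set \<Rightarrow> ('b \<times> 'b) set \<Rightarrow> ('b \<Rightarrow> 'b \<Rightarrow> real) \<Rightarrow> real" where
  "inter_G V E VH EH w = Inf (inter V E ` {F. is_H_flow V E VH EH w F})"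

definition inter_star_G :: "'a set \<Rightarrow> ('a \<times> 'a) set \<Rightarrow> 'b set \<Rightarrow> ('b \<times> 'b) set \<Rightarrow> ('b \<Rightarrow> 'b \<Rightarrow> real) \<Rightarrow> real" where
  "inter_star_G V E VH EH w = Inf (inter V E ` {F. is_H_flow V E VH EH w F \<and> integral_flow V E F})"

end

theory Submission
  imports Defs
begin

text \<open>
  The intersection number is the quadratic form \<open>\<Sum>p p'. w p p' * F p * F p'\<close> in the path
  weights, where \<open>w p p'\<close> is \<open>|p \<inter> p'|\<close> if the four endpoints of \<open>p\<close> and \<open>p'\<close> are
  distinct and \<open>0\<close> otherwise. Two paths with the same endpoints never interact, so in the
  weights of a single endpoint pair the form is affine: moving all the weight of that pair onto
  a path of least gradient keeps every \<open>F[u,v]\<close> and does not increase the form. Doing this for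
  each endpoint pair in turn yields an integral flow. Since this preserves all \<open>F[u,v]\<close>, it
  maps \<open>H\<close>-flows to integral \<open>H\<close>-flows, whence \<open>inter\<^sup>* = inter\<close>; and \<open>inter \<le> con\<close> because
  \<open>con F = \<Sum>p p'. |p \<inter> p'| * F p * F p'\<close>.
\<close>

lemma finite_all_paths:
  assumes "finite V"
  shows "finite (all_paths V E)"
proof (rule finite_subset)
  show "all_paths V E \<subseteq> {xs. set xs \<subseteq> V \<and> length xs \<le> card V}"
  proof
    fix p assume "p \<in> all_paths V E"
    then have "distinct p" "set p \<subseteq> V" by (auto simp: all_paths_def is_path_def)
    then have "length p \<le> card V"
      using card_mono[OF assms] by (metis distinct_card)
    with \<open>set p \<subseteq> V\<close> show "p \<in> {xs. set xs \<subseteq> V \<and> length xs \<le> card V}" by simp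
  qed
  show "finite {xs. set xs \<subseteq> V \<and> length xs \<le> card V}"
    using finite_lists_length_le[OF assms] by simp
qed

lemma paths_eq_all_paths_filter: "paths V E u v = {p \<in> all_paths V E. hd p = u \<and> last p = v}"
  by (auto simp: paths_def all_paths_def)

lemma paths_subset_all_paths: "paths V E u v \<subseteq> all_paths V E"
  by (auto simp: paths_def all_paths_def)

lemma finite_paths: "finite V \<Longrightarrow> finite (paths V E u v)"
  using finite_all_paths finite_subset paths_subset_all_paths by metis

lemma all_paths_ends_in_vertices:
  assumes "p \<in> all_paths V E"
  shows "hd p \<in> V" "last p \<in> V"
  using assms by (auto simp: all_paths_def is_path_def)

lemma paths_empty_if_not_vertex:
  assumes "(u, v) \<notin> V \<times> V"
  shows "paths V E u v = {}"
  using assms all_paths_ends_in_vertices by (fastforce simp: paths_eq_all_paths_filter)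

lemma sum_path_pairs_by_endpoints:
  assumes "finite V"
  shows "(\<Sum>p\<in>all_paths V E. \<Sum>p'\<in>all_paths V E. g p p') =
    (\<Sum>(u, v, u', v')\<in>V \<times> V \<times> V \<times> V. \<Sum>p\<in>paths V E u v. \<Sum>p'\<in>paths V E u' v'. g p p')"
proof -
  let ?A = "all_paths V E"
  define ends where "ends = (\<lambda>z::'a list \<times> 'a list. (hd (fst z), last (fst z), hd (snd z), last (snd z)))"
  have "(\<Sum>p\<in>?A. \<Sum>p'\<in>?A. g p p') = (\<Sum>z\<in>?A \<times> ?A. g (fst z) (snd z))"
    by (simp add: sum.cartesian_product case_prod_beta)
  also have "\<dots> = (\<Sum>t\<in>V \<times> V \<times> V \<times> V. \<Sum>z\<in>{z\<in>?A \<times> ?A. ends z = t}. g (fst z) (snd z))"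
    using assms finite_all_paths[OF assms] all_paths_ends_in_vertices
    by (intro sum.group[symmetric]) (auto simp: ends_def)
  also have "\<dots> = (\<Sum>(u, v, u', v')\<in>V \<times> V \<times> V \<times> V. \<Sum>p\<in>paths V E u v. \<Sum>p'\<in>paths V E u' v'. g p p')"
  proof (rule sum.cong[OF refl], clarify)
    fix u v u' v'
    have "{z\<in>?A \<times> ?A. ends z = (u, v, u', v')} = paths V E u v \<times> paths V E u' v'"
      by (auto simp: ends_def paths_eq_all_paths_filter)
    then show "(\<Sum>z\<in>{z\<in>?A \<times> ?A. ends z = (u, v, u', v')}. g (fst z) (snd z)) =
        (\<Sum>p\<in>paths V E u v. \<Sum>p'\<in>paths V E u' v'. g p p')"
      by (simp add: sum.cartesian_product case_prod_beta)
  qed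
  finally show ?thesis .
qed

section \<open>The intersection number as a quadratic form\<close>

definition cross_weight :: "'a list \<Rightarrow> 'a list \<Rightarrow> real" where
  "cross_weight p p' =
     (if card {hd p, last p, hd p', last p'} = 4 then real (card (set p \<inter> set p')) else 0)"

definition inter_form :: "'a set \<Rightarrow> ('a \<times> 'a) set \<Rightarrow> ('a list \<Rightarrow> real) \<Rightarrow> real" where
  "inter_form V E F = (\<Sum>p\<in>all_paths V E. \<Sum>p'\<in>all_paths V E. cross_weight p p' * (F p * F p'))"

lemma cross_weight_le_card: "cross_weight p p' \<le> real (card (set p \<inter> set p'))"
  by (simp add: cross_weight_def)

lemma cross_weight_same_ends:
  assumes "hd p = hd p'" "last p = last p'"
  shows "cross_weight p p' = 0"
proof -
  have "card {hd p, last p, hd p', last p'} \<le> 2"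
    using assms by (simp add: card_insert_le_m1 card_insert_if)
  then show ?thesis by (simp add: cross_weight_def)
qed

lemma inter_eq_inter_form:
  assumes "finite V"
  shows "inter V E F = inter_form V E F"
proof -
  define quads where "quads = {(u, v, u', v'). u \<in> V \<and> v \<in> V \<and> u' \<in> V \<and> v' \<in> V \<and> card {u, v, u', v'} = 4}"
  define overlap where "overlap = (\<lambda>(u, v, u', v'). \<Sum>p\<in>paths V E u v. \<Sum>p'\<in>paths V E u' v'.
        real (card (set p \<inter> set p')) * (F p * F p'))"
  have "inter_form V E F =
      (\<Sum>t\<in>V \<times> V \<times> V \<times> V. if t \<in> quads then overlap t else 0)"
    unfolding inter_form_def sum_path_pairs_by_endpoints[OF assms]
  proof (intro sum.cong refl, clarify)
    fix u v u' v' assume "u \<in> V" "v \<in> V" "u' \<in> V" "v' \<in> V"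
    have weight: "cross_weight p p' =
        (if card {u, v, u', v'} = 4 then real (card (set p \<inter> set p')) else 0)"
      if "p \<in> paths V E u v" "p' \<in> paths V E u' v'" for p p'
      using that by (simp add: cross_weight_def paths_def)
    show "(\<Sum>p\<in>paths V E u v. \<Sum>p'\<in>paths V E u' v'. cross_weight p p' * (F p * F p')) =
        (if (u, v, u', v') \<in> quads then overlap (u, v, u', v') else 0)"
      using \<open>u \<in> V\<close> \<open>v \<in> V\<close> \<open>u' \<in> V\<close> \<open>v' \<in> V\<close>
      by (cases "card {u, v, u', v'} = 4") (simp_all add: weight quads_def overlap_def)
  qed
  also have "\<dots> = sum overlap (V \<times> V \<times> V \<times> V \<inter> quads)"
    using assms by (simp add: sum.inter_restrict)
  also have "V \<times> V \<times> V \<times> V \<inter> quads = quads"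
    by (auto simp: quads_def)
  also have "sum overlap quads = inter V E F"
    unfolding inter_def quads_def overlap_def by (intro sum.cong refl) (auto simp: mult.commute)
  finally show ?thesis by (rule sym)
qed

lemma inter_nonneg:
  assumes "\<And>p. 0 \<le> F p"
  shows "0 \<le> inter V E F"
  unfolding inter_def case_prod_beta by (intro sum_nonneg mult_nonneg_nonneg assms)

lemma con_eq_sum_overlaps:
  assumes "finite V"
  shows "con V E F =
    (\<Sum>p\<in>all_paths V E. \<Sum>p'\<in>all_paths V E. real (card (set p \<inter> set p')) * (F p * F p'))"
proof -
  let ?A = "all_paths V E"
  define a where "a = (\<lambda>x p. if x \<in> set p then F p else 0)"
  have "con V E F = (\<Sum>x\<in>V. \<Sum>p\<in>?A. \<Sum>p'\<in>?A. a x p * a x p')"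
    unfolding con_def load_def a_def using finite_all_paths[OF assms]
    by (simp add: sum.inter_filter power2_eq_square sum_product)
  also have "\<dots> = (\<Sum>p\<in>?A. \<Sum>p'\<in>?A. \<Sum>x\<in>V. a x p * a x p')"
    by (simp add: sum.swap[where A = V])
  also have "\<dots> = (\<Sum>p\<in>?A. \<Sum>p'\<in>?A. real (card (set p \<inter> set p')) * (F p * F p'))"
  proof (intro sum.cong refl)
    fix p p' assume "p \<in> ?A"
    then have "V \<inter> (set p \<inter> set p') = set p \<inter> set p'" by (auto simp: all_paths_def is_path_def)
    moreover have "(\<Sum>x\<in>V. a x p * a x p') =
        (\<Sum>x\<in>V. if x \<in> set p \<inter> set p' then F p * F p' else 0)"
      by (intro sum.cong) (auto simp: a_def)
    ultimately show "(\<Sum>x\<in>V. a x p * a x p') = real (card (set p \<inter> set p')) * (F p * F p')"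
      using sum.inter_restrict[OF assms, of "\<lambda>_. F p * F p'" "set p \<inter> set p'"] by simp
  qed
  finally show ?thesis .
qed

lemma inter_le_con:
  assumes "finite V" "\<And>p. 0 \<le> F p"
  shows "inter V E F \<le> con V E F"
  unfolding inter_eq_inter_form[OF assms(1)] con_eq_sum_overlaps[OF assms(1)] inter_form_def
  by (intro sum_mono mult_right_mono cross_weight_le_card mult_nonneg_nonneg assms(2))

section \<open>Concentrating a flow block by block\<close>

lemma quadratic_form_diff_sparse:
  fixes w :: "'p \<Rightarrow> 'p \<Rightarrow> real"
  assumes "finite A"
    and "\<And>p p'. p \<in> A \<Longrightarrow> p' \<in> A \<Longrightarrow> G p \<noteq> H p \<Longrightarrow> G p' \<noteq> H p' \<Longrightarrow> w p p' = 0"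
  shows "(\<Sum>p\<in>A. \<Sum>p'\<in>A. w p p' * (G p * G p')) - (\<Sum>p\<in>A. \<Sum>p'\<in>A. w p p' * (H p * H p')) =
    (\<Sum>p\<in>A. (G p - H p) * (\<Sum>p'\<in>A. (w p p' + w p' p) * H p'))"
proof -
  have pointwise: "w p p' * (G p * G p') - w p p' * (H p * H p') =
      w p p' * (G p - H p) * H p' + w p p' * H p * (G p' - H p')" if "p \<in> A" "p' \<in> A" for p p'
    using assms(2)[OF that] by (cases "G p = H p"; cases "G p' = H p'") (auto simp: algebra_simps)
  have "(\<Sum>p\<in>A. \<Sum>p'\<in>A. w p p' * (G p * G p')) - (\<Sum>p\<in>A. \<Sum>p'\<in>A. w p p' * (H p * H p')) =
      (\<Sum>p\<in>A. \<Sum>p'\<in>A. w p p' * (G p * G p') - w p p' * (H p * H p'))"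
    by (simp add: sum_subtractf)
  also have "\<dots> = (\<Sum>p\<in>A. \<Sum>p'\<in>A. w p p' * (G p - H p) * H p' + w p p' * H p * (G p' - H p'))"
    using pointwise by (intro sum.cong refl) simp
  also have "\<dots> =
      (\<Sum>p\<in>A. \<Sum>p'\<in>A. w p p' * (G p - H p) * H p') + (\<Sum>p\<in>A. \<Sum>p'\<in>A. w p p' * H p * (G p' - H p'))"
    by (simp add: sum.distrib)
  also have "(\<Sum>p\<in>A. \<Sum>p'\<in>A. w p p' * H p * (G p' - H p')) =
      (\<Sum>p\<in>A. \<Sum>p'\<in>A. w p' p * H p' * (G p - H p))"
    by (rule sum.swap)
  also have "(\<Sum>p\<in>A. \<Sum>p'\<in>A. w p p' * (G p - H p) * H p') + \<dots> =
      (\<Sum>p\<in>A. (G p - H p) * (\<Sum>p'\<in>A. (w p p' + w p' p) * H p'))"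
    by (simp add: sum_distrib_left sum.distrib[symmetric] distrib_left distrib_right mult_ac)
  finally show ?thesis .
qed

definition inter_gradient :: "'a set \<Rightarrow> ('a \<times> 'a) set \<Rightarrow> ('a list \<Rightarrow> real) \<Rightarrow> 'a list \<Rightarrow> real" where
  "inter_gradient V E H p = (\<Sum>p'\<in>all_paths V E. (cross_weight p p' + cross_weight p' p) * H p')"

lemma inter_form_diff_on_block:
  assumes "finite V" and agree: "\<And>p. (hd p, last p) \<noteq> (u, v) \<Longrightarrow> G p = H p"
  shows "inter_form V E G - inter_form V E H =
    (\<Sum>p\<in>paths V E u v. (G p - H p) * inter_gradient V E H p)"
proof -
  have "inter_form V E G - inter_form V E H =
      (\<Sum>p\<in>all_paths V E. (G p - H p) * inter_gradient V E H p)"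
    unfolding inter_form_def inter_gradient_def
  proof (rule quadratic_form_diff_sparse)
    fix p p' assume "G p \<noteq> H p" "G p' \<noteq> H p'"
    then show "cross_weight p p' = 0" using agree by (metis cross_weight_same_ends prod.inject)
  qed (rule finite_all_paths[OF assms(1)])
  also have "\<dots> = (\<Sum>p\<in>paths V E u v. (G p - H p) * inter_gradient V E H p)"
    using finite_all_paths[OF assms(1)] paths_subset_all_paths agree
    by (intro sum.mono_neutral_right) (auto simp: paths_eq_all_paths_filter)
  finally show ?thesis .
qed

lemma flow_val_cong:
  assumes "\<And>p. p \<in> paths V E u v \<Longrightarrow> G p = H p"
  shows "flow_val V E G u v = flow_val V E H u v"
  unfolding flow_val_def using assms by (rule sum.cong[OF refl])

lemma concentrate_block:
  assumes "finite V" and flow: "is_flow V E H"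
  obtains G where "is_flow V E G" "\<And>p. (hd p, last p) \<noteq> (u, v) \<Longrightarrow> G p = H p"
    "card {p \<in> paths V E u v. G p \<noteq> 0} \<le> 1"
    "\<And>a c. flow_val V E G a c = flow_val V E H a c"
    "inter_form V E G \<le> inter_form V E H"
proof (cases "paths V E u v = {}")
  case True
  then show ?thesis using flow by (intro that[of H]) auto
next
  case False
  let ?P = "paths V E u v" and ?L = "inter_gradient V E H"
  obtain q where "is_arg_min ?L (\<lambda>p. p \<in> ?P) q"
    using ex_is_arg_min_if_finite[OF finite_paths[OF assms(1)] False] by blast
  then have q: "q \<in> ?P" and q_min: "\<And>p. p \<in> ?P \<Longrightarrow> ?L q \<le> ?L p"
    by (auto simp: is_arg_min_linorder)
  define m where "m = flow_val V E H u v"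
  define G where "G = (\<lambda>p. if hd p = u \<and> last p = v then (if p = q then m else 0) else H p)"
  have H_nonneg: "\<And>p. 0 \<le> H p" using flow by (simp add: is_flow_def)
  have agree: "\<And>p. (hd p, last p) \<noteq> (u, v) \<Longrightarrow> G p = H p" by (auto simp: G_def)
  have G_block: "G p = (if p = q then m else 0)" if "p \<in> ?P" for p
    using that by (simp add: G_def paths_def)
  have concentrated: "(\<Sum>p\<in>?P. G p * f p) = m * f q" for f :: "'a list \<Rightarrow> real"
  proof -
    have "(\<Sum>p\<in>?P. G p * f p) = (\<Sum>p\<in>?P. if p = q then m * f q else 0)"
      using G_block by (intro sum.cong) auto
    then show ?thesis using q finite_paths[OF assms(1)] by simp
  qed
  have "is_flow V E G"
    using flow q H_nonneg unfolding is_flow_def G_def m_def flow_val_def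
    by (auto simp: paths_def intro: sum_nonneg)
  moreover have "card {p \<in> ?P. G p \<noteq> 0} \<le> 1"
  proof -
    have "{p \<in> ?P. G p \<noteq> 0} \<subseteq> {q}" using G_block by (auto split: if_splits)
    then show ?thesis using card_mono[of "{q}"] by fastforce
  qed
  moreover have "flow_val V E G a c = flow_val V E H a c" for a c
  proof (cases "(a, c) = (u, v)")
    case True
    then show ?thesis
      using concentrated[of "\<lambda>_. 1"] by (simp add: flow_val_def m_def)
  next
    case False
    then show ?thesis by (intro flow_val_cong agree) (auto simp: paths_def)
  qed
  moreover have "inter_form V E G \<le> inter_form V E H"
  proof -
    have "inter_form V E G - inter_form V E H = (\<Sum>p\<in>?P. (G p - H p) * ?L p)"
      using assms(1) agree by (rule inter_form_diff_on_block)
    also have "\<dots> = (\<Sum>p\<in>?P. G p * ?L p) - (\<Sum>p\<in>?P. H p * ?L p)"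
      by (simp add: sum_subtractf left_diff_distrib)
    also have "(\<Sum>p\<in>?P. G p * ?L p) = (\<Sum>p\<in>?P. H p * ?L q)"
      by (simp add: concentrated m_def flow_val_def sum_distrib_right)
    also have "\<dots> \<le> (\<Sum>p\<in>?P. H p * ?L p)"
      using q_min H_nonneg by (intro sum_mono mult_left_mono) auto
    finally show ?thesis by simp
  qed
  ultimately show ?thesis using agree that by blast
qed

lemma concentrate_blocks:
  assumes "finite V" "finite K" "is_flow V E H"
  shows "\<exists>G. is_flow V E G \<and> (\<forall>p. (hd p, last p) \<notin> K \<longrightarrow> G p = H p) \<and>
    (\<forall>(u, v)\<in>K. card {p \<in> paths V E u v. G p \<noteq> 0} \<le> 1) \<and>
    (\<forall>a c. flow_val V E G a c = flow_val V E H a c) \<and> inter_form V E G \<le> inter_form V E H"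
  using assms(2,3)
proof (induction K arbitrary: H rule: finite_induct)
  case empty
  then show ?case by (intro exI[of _ H]) auto
next
  case (insert b K)
  obtain u v where b: "b = (u, v)" by fastforce
  obtain G1 where G1: "is_flow V E G1" "\<And>p. (hd p, last p) \<noteq> (u, v) \<Longrightarrow> G1 p = H p"
    "card {p \<in> paths V E u v. G1 p \<noteq> 0} \<le> 1" "\<And>a c. flow_val V E G1 a c = flow_val V E H a c"
    "inter_form V E G1 \<le> inter_form V E H"
    using concentrate_block[OF assms(1) insert.prems] by blast
  obtain G2 where G2: "is_flow V E G2" "\<forall>p. (hd p, last p) \<notin> K \<longrightarrow> G2 p = G1 p"
    "\<forall>(u, v)\<in>K. card {p \<in> paths V E u v. G2 p \<noteq> 0} \<le> 1"
    "\<forall>a c. flow_val V E G2 a c = flow_val V E G1 a c" "inter_form V E G2 \<le> inter_form V E G1"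
    using insert.IH[OF G1(1)] by blast
  have "{p \<in> paths V E u v. G2 p \<noteq> 0} = {p \<in> paths V E u v. G1 p \<noteq> 0}"
    using G2(2) insert.hyps(2) b by (auto simp: paths_def)
  then show ?case
    using G1 G2 b by (intro exI[of _ G2]) auto
qed

lemma exists_integral_flow:
  assumes "finite V" "is_flow V E F"
  obtains F' where "is_flow V E F'" "integral_flow V E F'"
    "\<And>u v. flow_val V E F' u v = flow_val V E F u v" "inter V E F' \<le> inter V E F"
proof -
  obtain F' where F': "is_flow V E F'"
    "\<forall>(u, v)\<in>V \<times> V. card {p \<in> paths V E u v. F' p \<noteq> 0} \<le> 1"
    "\<forall>u v. flow_val V E F' u v = flow_val V E F u v" "inter_form V E F' \<le> inter_form V E F"
    using concentrate_blocks[OF assms(1) _ assms(2), of "V \<times> V"] assms(1) by blast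
  have "integral_flow V E F'"
    unfolding integral_flow_def
  proof (intro allI)
    fix u v
    show "card {p \<in> paths V E u v. F' p \<noteq> 0} \<le> 1"
      using F'(2) paths_empty_if_not_vertex[of u v V E] by (cases "(u, v) \<in> V \<times> V") auto
  qed
  then show ?thesis
    using that F' by (simp add: inter_eq_inter_form[OF assms(1)])
qed

lemma Inf_image_eq_if_dominating_subset:
  fixes f :: "'x \<Rightarrow> 'b :: conditionally_complete_lattice"
  assumes "T \<subseteq> S" "bdd_below (f ` S)" "\<And>x. x \<in> S \<Longrightarrow> \<exists>y\<in>T. f y \<le> f x"
  shows "Inf (f ` T) = Inf (f ` S)"
proof (cases "S = {}")
  case False
  then have "T \<noteq> {}" using assms(3) by blast
  have "bdd_below (f ` T)" using assms(1,2) bdd_below_mono image_mono by metis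
  then have "Inf (f ` T) \<le> Inf (f ` S)" using False assms(3) by (intro cINF_mono)
  moreover have "Inf (f ` S) \<le> Inf (f ` T)"
    using \<open>T \<noteq> {}\<close> assms(2,1) by (rule cINF_superset_mono) simp
  ultimately show ?thesis by (rule antisym)
qed (use assms(1) in simp)

lemma Inf_image_mono:
  fixes f g :: "'x \<Rightarrow> 'b :: conditionally_complete_lattice"
  assumes "bdd_below (f ` S)" "\<And>x. x \<in> S \<Longrightarrow> f x \<le> g x"
  shows "Inf (f ` S) \<le> Inf (g ` S)"
  using assms by (cases "S = {}") (auto intro: cINF_mono)

lemma exists_integral_H_flow:
  assumes "finite V" "is_H_flow V E VH EH w F"
  obtains F' where "is_H_flow V E VH EH w F'" "integral_flow V E F'" "inter V E F' \<le> inter V E F"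
proof -
  obtain F' where F': "is_flow V E F'" "integral_flow V E F'"
    "\<And>u v. flow_val V E F' u v = flow_val V E F u v" "inter V E F' \<le> inter V E F"
    using exists_integral_flow[OF assms(1)] assms(2) by (auto simp: is_H_flow_def)
  from F'(1,3) assms(2) have "is_H_flow V E VH EH w F'" by (simp add: is_H_flow_def)
  then show ?thesis using F'(2,4) by (rule that)
qed

theorem lemma3p3:
  fixes V :: "'a set" and E :: "('a \<times> 'a) set"
  assumes G: "simple_graph V E"
  shows "(\<forall>F. is_flow V E F \<and> unit_flow V E F \<longrightarrow>
            (\<exists>F'. is_flow V E F' \<and> integral_flow V E F' \<and> unit_flow V E F' \<and>
                  (\<forall>u v. flow_val V E F' u v = flow_val V E F u v) \<and>
                  inter V E F' \<le> inter V E F))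
       \<and> (\<forall>(VH :: 'b set) EH. simple_graph VH EH \<longrightarrow>
            inter_star_G V E VH EH (\<lambda>_ _. 1) = inter_G V E VH EH (\<lambda>_ _. 1) \<and>
            inter_G V E VH EH (\<lambda>_ _. 1) \<le> con_G V E VH EH (\<lambda>_ _. 1))"
proof (intro conjI allI impI)
  have "finite V" using G by (simp add: simple_graph_def)
  show "\<exists>F'. is_flow V E F' \<and> integral_flow V E F' \<and> unit_flow V E F' \<and>
      (\<forall>u v. flow_val V E F' u v = flow_val V E F u v) \<and> inter V E F' \<le> inter V E F"
    if "is_flow V E F \<and> unit_flow V E F" for F
    using exists_integral_flow[OF \<open>finite V\<close>] that by (metis unit_flow_def)
  fix VH :: "'b set" and EH :: "('b \<times> 'b) set"
  let ?S = "{F. is_H_flow V E VH EH (\<lambda>_ _. 1) F}"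
  have nonneg: "\<And>p. 0 \<le> F p" if "F \<in> ?S" for F
    using that by (simp add: is_H_flow_def is_flow_def)
  have bdd: "bdd_below (inter V E ` ?S)" using nonneg by (auto intro!: bdd_belowI[of _ 0] inter_nonneg)
  have "\<exists>F'\<in>{F \<in> ?S. integral_flow V E F}. inter V E F' \<le> inter V E F" if "F \<in> ?S" for F
    using exists_integral_H_flow[OF \<open>finite V\<close>] that by (metis (lifting) mem_Collect_eq)
  with bdd show "inter_star_G V E VH EH (\<lambda>_ _. 1) = inter_G V E VH EH (\<lambda>_ _. 1)"
    unfolding inter_star_G_def inter_G_def by (intro Inf_image_eq_if_dominating_subset) auto
  show "inter_G V E VH EH (\<lambda>_ _. 1) \<le> con_G V E VH EH (\<lambda>_ _. 1)"
    unfolding inter_G_def con_G_def using bdd inter_le_con[OF \<open>finite V\<close> nonneg]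
    by (rule Inf_image_mono)
qed

end
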